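(* Let $0<\beta_1<\beta_2$. There is a unique $a=a(\beta_1,\beta_2)\in(0,1/\beta_1)$ satisfying $a\beta_1-1+(a\beta_2+1)e^{-a(\beta_1+\beta_2)}=0$. Moreover, for every $c\in(0,1)$, the limit $\lim a(\beta_1,\beta_2)\,\beta_1$, taken as $\beta_1/\beta_2\to c$ and $\beta_2\to0$, exists and lies in $(0,1)$. *)

theory Defs
  imports "HOL-Analysis.Analysis"
begin

definition aeq :: "real \<Rightarrow> real \<Rightarrow> real \<Rightarrow> bool" where
  "aeq b1 b2 a \<longleftrightarrow> a * b1 - 1 + (a * b2 + 1) * exp (- a * (b1 + b2)) = 0"

definition aroot :: "real \<Rightarrow> real \<Rightarrow> real" where
  "aroot b1 b2 = (THE a. 0 < a \<and> a < 1 / b1 \<and> aeq b1 b2 a)"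

definition ratio_filter :: "real \<Rightarrow> (real \<times> real) filter" where
  "ratio_filter c = inf (inf (filtercomap (\<lambda>(b1, b2). b1 / b2) (nhds c))
                               (filtercomap snd (at_right 0)))
                          (principal {(b1, b2). 0 < b1 \<and> b1 < b2})"

end

theory Submission
  imports Defs
begin

text \<open>
  With \<open>y = a \<beta>\<^sub>1\<close> and \<open>r = \<beta>\<^sub>2 / \<beta>\<^sub>1 > 1\<close>, taking logarithms turns the equation into
  \<open>F\<^sub>r(y) = ln (1 - y) + (1 + r) y - ln (1 + r y) = 0\<close> on \<open>(0, 1)\<close> (\<open>F\<^sub>r\<close> is \<open>aeq_log r\<close> below).
  As \<open>F\<^sub>r(0) = 0\<close> and \<open>F\<^sub>r\<close> increases up to \<open>(r - 1) / r\<close> and then decreases towards \<open>-\<infinity>\<close>,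
  \<open>F\<^sub>r\<close> has exactly one zero \<open>x(r)\<close> in \<open>(0, 1)\<close>, being positive before and negative after it.
  This sign pattern makes \<open>x\<close> continuous in \<open>r\<close>, and since \<open>a(\<beta>\<^sub>1, \<beta>\<^sub>2) \<beta>\<^sub>1 = x(\<beta>\<^sub>2 / \<beta>\<^sub>1)\<close>,
  the limit is \<open>x(1 / c)\<close>.
\<close>

lemma sign_change_of_unimodal:
  fixes f :: "real \<Rightarrow> real"
  assumes "a < m" "f a = 0"
    and incr: "\<And>u v. a \<le> u \<Longrightarrow> u < v \<Longrightarrow> v \<le> m \<Longrightarrow> f u < f v"
    and decr: "\<And>u v. m \<le> u \<Longrightarrow> u < v \<Longrightarrow> v < b \<Longrightarrow> f v < f u"
    and cont: "continuous_on {a..<b} f"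
    and neg: "a < z" "z < b" "f z < 0"
  obtains x where "a < x" "x < b"
    "\<And>y. a < y \<Longrightarrow> y < b \<Longrightarrow> (0 < f y \<longleftrightarrow> y < x) \<and> (f y < 0 \<longleftrightarrow> x < y)"
proof -
  have pos: "0 < f y" if "a < y" "y \<le> m" for y
    using incr[of a y] that \<open>f a = 0\<close> by simp
  then have "m < z"
    using neg by force
  moreover have "continuous_on {m..z} f"
    using cont by (rule continuous_on_subset) (use \<open>a < m\<close> \<open>z < b\<close> in auto)
  ultimately obtain x where x: "m \<le> x" "x \<le> z" "f x = 0"
    using IVT2'[of f z 0 m] neg pos[of m] \<open>a < m\<close> by force
  with pos[of m] \<open>a < m\<close> have "m < x"
    by (cases "x = m") auto
  have sign: "(0 < f y \<longleftrightarrow> y < x) \<and> (f y < 0 \<longleftrightarrow> x < y)" if "a < y" "y < b" for y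
  proof -
    consider "y \<le> m" | "m < y" "y < x" | "y = x" | "x < y"
      by linarith
    then show ?thesis
    proof cases
      case 1
      then show ?thesis using pos[of y] \<open>a < y\<close> \<open>m < x\<close> by auto
    next
      case 2
      then show ?thesis using decr[of y x] x neg by auto
    next
      case 3
      then show ?thesis using x by auto
    next
      case 4
      then show ?thesis using decr[of x y] x \<open>m < x\<close> \<open>y < b\<close> by auto
    qed
  qed
  show thesis
    by (rule that[OF _ _ sign]) (use \<open>a < m\<close> \<open>m < x\<close> x neg in auto)
qed

definition aeq_log :: "real \<Rightarrow> real \<Rightarrow> real" where
  "aeq_log r y = ln (1 - y) + (1 + r) * y - ln (1 + r * y)"

lemma has_real_derivative_aeq_log:
  assumes "0 \<le> r" "0 \<le> y" "y < 1"
  shows "(aeq_log r has_real_derivative (1 + r) * y * (r - 1 - r * y) / ((1 - y) * (1 + r * y))) (at y)"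
proof -
  have "0 < 1 + r * y"
    using assms by (simp add: add_pos_nonneg)
  then have "(aeq_log r has_real_derivative - 1 / (1 - y) + (1 + r) - r / (1 + r * y)) (at y)"
    unfolding aeq_log_def using assms by (auto intro!: derivative_eq_intros)
  moreover have "- 1 / (1 - y) + (1 + r) - r / (1 + r * y)
      = (1 + r) * y * (r - 1 - r * y) / ((1 - y) * (1 + r * y))"
    using assms \<open>0 < 1 + r * y\<close> by (simp add: field_simps)
  ultimately show ?thesis
    by simp
qed

lemma continuous_on_aeq_log: "0 \<le> r \<Longrightarrow> continuous_on {0..<1} (aeq_log r)"
  by (intro continuous_at_imp_continuous_on ballI DERIV_isCont)
    (use has_real_derivative_aeq_log in auto)

lemma aeq_log_strict_mono:
  assumes "1 < r" "0 \<le> u" "u < v" "v \<le> (r - 1) / r"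
  shows "aeq_log r u < aeq_log r v"
proof (rule DERIV_pos_imp_increasing_open[OF \<open>u < v\<close>])
  have "r * v \<le> r - 1" "(r - 1) / r < 1"
    using assms by (simp_all add: field_simps)
  then have "v < 1"
    using assms by linarith
  then show "continuous_on {u..v} (aeq_log r)"
    using continuous_on_aeq_log[of r] assms by (rule_tac continuous_on_subset) auto
  fix y
  assume "u < y" "y < v"
  then have "r * y < r * v" "0 < y" "y < 1" "0 < r * y"
    using assms \<open>v < 1\<close> by auto
  then have "0 < r - 1 - r * y" "0 < 1 + r * y"
    using \<open>r * v \<le> r - 1\<close> by linarith+
  with \<open>0 < y\<close> \<open>y < 1\<close> \<open>1 < r\<close>
  have "0 < (1 + r) * y * (r - 1 - r * y) / ((1 - y) * (1 + r * y))"
    by (intro divide_pos_pos mult_pos_pos) auto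
  with \<open>0 < y\<close> \<open>y < 1\<close> \<open>1 < r\<close> show "\<exists>d. (aeq_log r has_real_derivative d) (at y) \<and> 0 < d"
    using has_real_derivative_aeq_log[of r y] by auto
qed

lemma aeq_log_strict_antimono:
  assumes "1 < r" "(r - 1) / r \<le> u" "u < v" "v < 1"
  shows "aeq_log r v < aeq_log r u"
proof (rule DERIV_neg_imp_decreasing_open[OF \<open>u < v\<close>])
  have "r - 1 \<le> r * u" "0 \<le> (r - 1) / r"
    using assms by (simp_all add: field_simps)
  then have "0 \<le> u"
    using assms by linarith
  then show "continuous_on {u..v} (aeq_log r)"
    using continuous_on_aeq_log[of r] assms by (rule_tac continuous_on_subset) auto
  fix y
  assume "u < y" "y < v"
  then have "r * u < r * y" "0 < y" "y < 1" "0 < r * y"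
    using assms \<open>0 \<le> u\<close> by auto
  then have "r - 1 - r * y < 0" "0 < 1 + r * y"
    using \<open>r - 1 \<le> r * u\<close> by linarith+
  with \<open>0 < y\<close> \<open>y < 1\<close> \<open>1 < r\<close>
  have "(1 + r) * y * (r - 1 - r * y) / ((1 - y) * (1 + r * y)) < 0"
    by (intro divide_neg_pos mult_pos_neg mult_pos_pos) auto
  with \<open>0 < y\<close> \<open>y < 1\<close> \<open>1 < r\<close> show "\<exists>d. (aeq_log r has_real_derivative d) (at y) \<and> d < 0"
    using has_real_derivative_aeq_log[of r y] by auto
qed

text \<open>At this point \<open>ln (1 - y) = -(1 + r)\<close> already outweighs \<open>(1 + r) y\<close>.\<close>

lemma aeq_log_negative_near_1:
  assumes "0 < r"
  shows "aeq_log r (1 - exp (- (1 + r))) < 0"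
proof -
  define z where "z = 1 - exp (- (1 + r))"
  have "0 < z" "z < 1"
    using assms by (auto simp: z_def)
  then have "0 < ln (1 + r * z)" "(1 + r) * z < 1 + r" "ln (1 - z) = - (1 + r)"
    using assms by (auto simp: z_def ln_gt_zero)
  then show ?thesis
    unfolding aeq_log_def z_def[symmetric] by linarith
qed

lemma aeq_log_sign_change:
  assumes "1 < r"
  obtains x where "0 < x" "x < 1"
    "\<And>y. 0 < y \<Longrightarrow> y < 1 \<Longrightarrow> (0 < aeq_log r y \<longleftrightarrow> y < x) \<and> (aeq_log r y < 0 \<longleftrightarrow> x < y)"
  using sign_change_of_unimodal[of 0 "(r - 1) / r" "aeq_log r" 1 "1 - exp (- (1 + r))"]
    aeq_log_strict_mono[OF assms] aeq_log_strict_antimono[OF assms]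
    continuous_on_aeq_log aeq_log_negative_near_1 assms
  by (auto simp: aeq_log_def)

definition aeq_log_root :: "real \<Rightarrow> real" where
  "aeq_log_root r = (THE x. 0 < x \<and> x < 1 \<and> aeq_log r x = 0)"

lemma aeq_log_root:
  assumes "1 < r"
  shows aeq_log_root_pos: "0 < aeq_log_root r"
    and aeq_log_root_less_1: "aeq_log_root r < 1"
    and aeq_log_pos_iff: "\<And>y. 0 < y \<Longrightarrow> y < 1 \<Longrightarrow> 0 < aeq_log r y \<longleftrightarrow> y < aeq_log_root r"
    and aeq_log_neg_iff: "\<And>y. 0 < y \<Longrightarrow> y < 1 \<Longrightarrow> aeq_log r y < 0 \<longleftrightarrow> aeq_log_root r < y"
    and aeq_log_eq_0_iff: "\<And>y. 0 < y \<Longrightarrow> y < 1 \<Longrightarrow> aeq_log r y = 0 \<longleftrightarrow> y = aeq_log_root r"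
proof -
  obtain x where x: "0 < x" "x < 1" and sign:
    "\<And>y. 0 < y \<Longrightarrow> y < 1 \<Longrightarrow> (0 < aeq_log r y \<longleftrightarrow> y < x) \<and> (aeq_log r y < 0 \<longleftrightarrow> x < y)"
    using aeq_log_sign_change[OF assms] by blast
  have zero: "aeq_log r y = 0 \<longleftrightarrow> y = x" if "0 < y" "y < 1" for y
    using sign[OF that] by (cases y x rule: linorder_cases) auto
  have "aeq_log_root r = x"
    unfolding aeq_log_root_def using x zero by (intro the_equality) auto
  with x sign zero show "0 < aeq_log_root r" "aeq_log_root r < 1"
    "\<And>y. 0 < y \<Longrightarrow> y < 1 \<Longrightarrow> 0 < aeq_log r y \<longleftrightarrow> y < aeq_log_root r"
    "\<And>y. 0 < y \<Longrightarrow> y < 1 \<Longrightarrow> aeq_log r y < 0 \<longleftrightarrow> aeq_log_root r < y"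
    "\<And>y. 0 < y \<Longrightarrow> y < 1 \<Longrightarrow> aeq_log r y = 0 \<longleftrightarrow> y = aeq_log_root r"
    by simp_all
qed

lemma aeq_iff_aeq_log:
  assumes "0 < b1" "0 \<le> b2"
  shows "(0 < a \<and> a < 1 / b1 \<and> aeq b1 b2 a)
    \<longleftrightarrow> (0 < a * b1 \<and> a * b1 < 1 \<and> aeq_log (b2 / b1) (a * b1) = 0)"
proof -
  define y r where "y = a * b1" and "r = b2 / b1"
  have "0 \<le> r"
    using assms by (simp add: r_def)
  have interval: "(0 < a \<and> a < 1 / b1) \<longleftrightarrow> (0 < y \<and> y < 1)"
    using assms by (auto simp: y_def field_simps zero_less_mult_iff)
  have "aeq b1 b2 a \<longleftrightarrow> aeq_log r y = 0" if "0 < y" "y < 1"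
  proof -
    have "0 < 1 + r * y"
      using \<open>0 \<le> r\<close> \<open>0 < y\<close> by (simp add: add_pos_nonneg)
    have "a * b2 = r * y" "- a * (b1 + b2) = - ((1 + r) * y)"
      using assms by (simp_all add: y_def r_def field_simps)
    then have "aeq b1 b2 a \<longleftrightarrow> 1 - y = (1 + r * y) * exp (- ((1 + r) * y))"
      unfolding aeq_def y_def[symmetric] by (simp add: add.commute) linarith
    also have "\<dots> \<longleftrightarrow> ln (1 - y) = ln ((1 + r * y) * exp (- ((1 + r) * y)))"
      using \<open>y < 1\<close> \<open>0 < 1 + r * y\<close> by (intro ln_inj_iff[symmetric]) auto
    also have "\<dots> \<longleftrightarrow> aeq_log r y = 0"
      using \<open>0 < 1 + r * y\<close> by (auto simp: aeq_log_def ln_mult)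
    finally show ?thesis .
  qed
  with interval show ?thesis
    unfolding y_def r_def by blast
qed

lemma aeq_in_interval_iff:
  assumes "0 < b1" "b1 < b2"
  shows "(0 < a \<and> a < 1 / b1 \<and> aeq b1 b2 a) \<longleftrightarrow> a = aeq_log_root (b2 / b1) / b1"
proof -
  have "1 < b2 / b1"
    using assms by simp
  then show ?thesis
    using aeq_iff_aeq_log[of b1 b2 a] assms aeq_log_eq_0_iff[of "b2 / b1" "a * b1"]
      aeq_log_root_pos[of "b2 / b1"] aeq_log_root_less_1[of "b2 / b1"]
    by (auto simp: field_simps)
qed

lemma aroot_eq_aeq_log_root:
  assumes "0 < b1" "b1 < b2"
  shows "aroot b1 b2 = aeq_log_root (b2 / b1) / b1"
  unfolding aroot_def aeq_in_interval_iff[OF assms] by (rule the_eq_trivial)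

lemma isCont_aeq_log_in_r:
  assumes "0 \<le> y" "y < 1" "0 \<le> r\<^sub>0"
  shows "isCont (\<lambda>r. aeq_log r y) r\<^sub>0"
proof -
  have "0 < 1 + r\<^sub>0 * y"
    using assms by (simp add: add_pos_nonneg)
  then show ?thesis
    unfolding aeq_log_def using assms by (intro continuous_intros) auto
qed

lemma isCont_aeq_log_root:
  assumes "1 < r\<^sub>0"
  shows "isCont aeq_log_root r\<^sub>0"
  unfolding isCont_def tendsto_iff
proof (intro allI impI)
  fix \<epsilon> :: real
  assume "0 < \<epsilon>"
  define x where "x = aeq_log_root r\<^sub>0"
  define e where "e = min \<epsilon> (min (x / 2) ((1 - x) / 2))"
  have "0 < x" "x < 1"
    unfolding x_def using aeq_log_root_pos aeq_log_root_less_1 assms by auto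
  moreover have "0 < e" "e \<le> \<epsilon>" "e \<le> x / 2" "e \<le> (1 - x) / 2"
    using \<open>0 < \<epsilon>\<close> \<open>0 < x\<close> \<open>x < 1\<close> by (auto simp: e_def min_def)
  ultimately have e: "0 < e" "e \<le> \<epsilon>" "0 < x - e" "x + e < 1"
    by simp_all
  have "0 < aeq_log r\<^sub>0 (x - e)" "aeq_log r\<^sub>0 (x + e) < 0"
    using aeq_log_pos_iff[OF assms] aeq_log_neg_iff[OF assms] e unfolding x_def by auto
  moreover have lim: "((\<lambda>r. aeq_log r y) \<longlongrightarrow> aeq_log r\<^sub>0 y) (at r\<^sub>0)" if "0 < y" "y < 1" for y
    using isCont_aeq_log_in_r[of y r\<^sub>0] that assms by (simp add: isCont_def)
  ultimately have "\<forall>\<^sub>F r in at r\<^sub>0. 0 < aeq_log r (x - e)" "\<forall>\<^sub>F r in at r\<^sub>0. aeq_log r (x + e) < 0"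
    using order_tendstoD[OF lim] e by auto
  moreover have "\<forall>\<^sub>F r in at r\<^sub>0. 1 < r"
    using order_tendstoD(1)[OF tendsto_ident_at assms] .
  ultimately show "\<forall>\<^sub>F r in at r\<^sub>0. dist (aeq_log_root r) (aeq_log_root r\<^sub>0) < \<epsilon>"
  proof eventually_elim
    case (elim r)
    then have "x - e < aeq_log_root r" "aeq_log_root r < x + e"
      using aeq_log_pos_iff[of r "x - e"] aeq_log_neg_iff[of r "x + e"] e by auto
    then show ?case
      using e unfolding x_def dist_real_def by linarith
  qed
qed

lemma tendsto_ratio_filter: "((\<lambda>(b1, b2). b1 / b2) \<longlongrightarrow> c) (ratio_filter c)"
proof -
  have "ratio_filter c \<le> filtercomap (\<lambda>(b1, b2). b1 / b2) (nhds c)"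
    unfolding ratio_filter_def by (meson inf_le1 order_trans)
  then show ?thesis
    using filterlim_filtercomap filterlim_mono by blast
qed

lemma eventually_ratio_filter: "\<forall>\<^sub>F (b1, b2) in ratio_filter c. 0 < b1 \<and> b1 < b2"
proof -
  have "ratio_filter c \<le> principal {(b1, b2). 0 < b1 \<and> b1 < b2}"
    unfolding ratio_filter_def by (rule inf_le2)
  then show ?thesis
    by (simp add: le_principal case_prod_unfold)
qed

theorem lemma3p1:
  shows "(\<forall>b1 b2 :: real. 0 < b1 \<and> b1 < b2 \<longrightarrow>
            (\<exists>!a. 0 < a \<and> a < 1 / b1 \<and> aeq b1 b2 a))
       \<and> (\<forall>c :: real. 0 < c \<and> c < 1 \<longrightarrow>
            (\<exists>L. 0 < L \<and> L < 1 \<and>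
               ((\<lambda>(b1, b2). aroot b1 b2 * b1) \<longlongrightarrow> L) (ratio_filter c)))"
proof (intro conjI allI impI)
  fix b1 b2 :: real
  assume "0 < b1 \<and> b1 < b2"
  then show "\<exists>!a. 0 < a \<and> a < 1 / b1 \<and> aeq b1 b2 a"
    using aeq_in_interval_iff[of b1 b2] by simp
next
  fix c :: real
  assume c: "0 < c \<and> c < 1"
  then have "1 < inverse c"
    by (simp add: one_less_inverse)
  have "((\<lambda>(b1, b2). aeq_log_root (b2 / b1)) \<longlongrightarrow> aeq_log_root (inverse c)) (ratio_filter c)"
    using isCont_tendsto_compose[OF isCont_aeq_log_root[OF \<open>1 < inverse c\<close>]
        tendsto_inverse[OF tendsto_ratio_filter]] c
    by (simp add: case_prod_unfold)
  moreover have "\<forall>\<^sub>F p in ratio_filter c.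
      (case p of (b1, b2) \<Rightarrow> aeq_log_root (b2 / b1)) = (case p of (b1, b2) \<Rightarrow> aroot b1 b2 * b1)"
    using eventually_ratio_filter by eventually_elim (auto simp: aroot_eq_aeq_log_root split: prod.splits)
  ultimately have "((\<lambda>(b1, b2). aroot b1 b2 * b1) \<longlongrightarrow> aeq_log_root (inverse c)) (ratio_filter c)"
    by (rule Lim_transform_eventually)
  then show "\<exists>L. 0 < L \<and> L < 1 \<and> ((\<lambda>(b1, b2). aroot b1 b2 * b1) \<longlongrightarrow> L) (ratio_filter c)"
    using aeq_log_root_pos aeq_log_root_less_1 \<open>1 < inverse c\<close> by blast
qed

end
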